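(* Let $s\geq 1$ and $t\geq 3$ be integers and $\delta>0$. Let $G$ be a bipartite graph with bipartition $A\cup B$, $|B|=n$, containing no copy of $L'_{s,t}$ as a subgraph, such that every vertex of $A$ has degree at least $\delta$ in $G$. Then for every subset $U\subseteq A$ with $|U|\geq \frac{8(s+t)n}{\delta}$ and $|U|\geq 2$, the number of light edges of $W_G$ with both endpoints in $U$ is at least $\frac{\delta^2}{8(s+t)^3 n}\binom{|U|}{2}$.
   Context: For a bipartite graph $G$ with bipartition $A\cup B$, write $d_G(u,v)=|N_G(u)\cap N_G(v)|$ for $u,v\in A$, where $N_G(x)$ is the neighbourhood of $x$ in $G$. The neighbourhood graph $W_G$ is the weighted graph on $A$ where the pair $uv$ has weight $d_G(u,v)$. A pair $uv$ of distinct vertices of $A$ is a light edge if $1\leq d_G(u,v)<\binom{s+t-1}{2}$. The subdivision of a graph $L$ is the bipartite graph with parts $V(L)$ and $E(L)$ in which $v\in V(L)$ is adjacent to $e\in E(L)$ iff $v$ is an endpoint of $e$. $L_{s,t}$ is the graph on vertex set $S\cup T$, $S\cap T=\emptyset$, $|S|=s$, $|T|=t-1$, where distinct $x,y$ are adjacent iff $x\in T$ or $y\in T$; $L'_{s,t}$ is its subdivision. *)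

theory Defs
  imports Complex_Main
begin

definition bipartite_graph :: "'a set \<Rightarrow> 'a set \<Rightarrow> ('a \<times> 'a) set \<Rightarrow> bool" where
  "bipartite_graph A B E \<longleftrightarrow> finite A \<and> finite B \<and> A \<inter> B = {} \<and> E \<subseteq> A \<times> B"

definition adj :: "('a \<times> 'a) set \<Rightarrow> 'a \<Rightarrow> 'a \<Rightarrow> bool" where
  "adj E x y \<longleftrightarrow> (x, y) \<in> E \<or> (y, x) \<in> E"

definition nbhd :: "'a set \<Rightarrow> 'a set \<Rightarrow> ('a \<times> 'a) set \<Rightarrow> 'a \<Rightarrow> 'a set" where
  "nbhd A B E x = {y \<in> A \<union> B. adj E x y}"

definition codeg :: "'a set \<Rightarrow> 'a set \<Rightarrow> ('a \<times> 'a) set \<Rightarrow> 'a \<Rightarrow> 'a \<Rightarrow> nat" where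
  "codeg A B E u v = card (nbhd A B E u \<inter> nbhd A B E v)"

text \<open>Light edge of the neighbourhood graph W_G.\<close>
definition light_edge :: "nat \<Rightarrow> nat \<Rightarrow> 'a set \<Rightarrow> 'a set \<Rightarrow> ('a \<times> 'a) set \<Rightarrow> 'a \<Rightarrow> 'a \<Rightarrow> bool" where
  "light_edge s t A B E u v \<longleftrightarrow> u \<in> A \<and> v \<in> A \<and> u \<noteq> v \<and>
     1 \<le> codeg A B E u v \<and> codeg A B E u v < (s + t - 1) choose 2"

definition num_light_edges :: "nat \<Rightarrow> nat \<Rightarrow> 'a set \<Rightarrow> 'a set \<Rightarrow> ('a \<times> 'a) set \<Rightarrow> 'a set \<Rightarrow> nat" where
  "num_light_edges s t A B E U =
     card {{u, v} | u v. u \<in> U \<and> v \<in> U \<and> light_edge s t A B E u v}"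

definition L_S :: "nat \<Rightarrow> (nat + nat) set" where
  "L_S s = Inl ` {..<s}"
definition L_T :: "nat \<Rightarrow> (nat + nat) set" where
  "L_T t = Inr ` {..<t - 1}"
definition L_V :: "nat \<Rightarrow> nat \<Rightarrow> (nat + nat) set" where
  "L_V s t = L_S s \<union> L_T t"
definition L_E :: "nat \<Rightarrow> nat \<Rightarrow> (nat + nat) set set" where
  "L_E s t = {{x, y} | x y. x \<in> L_V s t \<and> y \<in> L_V s t \<and> x \<noteq> y \<and> (x \<in> L_T t \<or> y \<in> L_T t)}"

definition contains_subdivision ::
  "'v set \<Rightarrow> 'v set set \<Rightarrow> 'a set \<Rightarrow> 'a set \<Rightarrow> ('a \<times> 'a) set \<Rightarrow> bool" where
  "contains_subdivision V Es A B E \<longleftrightarrow>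
     (\<exists>f. inj_on f (Inl ` V \<union> Inr ` Es) \<and> f ` (Inl ` V \<union> Inr ` Es) \<subseteq> A \<union> B \<and>
          (\<forall>v\<in>V. \<forall>e\<in>Es. v \<in> e \<longrightarrow> adj E (f (Inl v)) (f (Inr e))))"

definition contains_L'_st :: "nat \<Rightarrow> nat \<Rightarrow> 'a set \<Rightarrow> 'a set \<Rightarrow> ('a \<times> 'a) set \<Rightarrow> bool" where
  "contains_L'_st s t A B E \<longleftrightarrow> contains_subdivision (L_V s t) (L_E s t) A B E"

end

theory Submission
  imports Defs
begin

text \<open>
  Fix a vertex b \<in> B and let X_b be its neighbourhood in U.  Any s + t - 1 vertices of X_b have the
  common neighbour b, so if no two of them formed a light edge they would be pairwise joined by at
  least C = binom(s+t-1, 2) common neighbours, and a greedy choice of distinct common neighbours for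
  the edges of L_{s,t} would embed L'_{s,t}.  Hence the light edges inside X_b form a graph with
  independence number less than s + t - 1, and Turan's theorem (in complement form) gives at
  least |X_b|^2/(s+t-2) - |X_b| ordered light pairs in X_b.  Summing over b, Cauchy--Schwarz and
  \<Sum>_b |X_b| \<ge> |U|\<delta> \<ge> 8(s+t)n give of the order of (|U|\<delta>)^2/((s+t)n) ordered light pairs counted
  with multiplicity, while each light pair uv is counted only d_G(u,v) < C \<le> (s+t)^2/2 times.
\<close>

lemma ex_inj_choice:
  assumes "finite I" "card I \<le> c" "\<And>i. i \<in> I \<Longrightarrow> finite (S i) \<and> c \<le> card (S i)"
  shows "\<exists>h. inj_on h I \<and> (\<forall>i\<in>I. h i \<in> S i)"
  using assms
proof (induction I rule: finite_induct)
  case empty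
  then show ?case by auto
next
  case (insert i I)
  then obtain h where h: "inj_on h I" "\<forall>j\<in>I. h j \<in> S j" by auto
  have "card (h ` I) < card (S i)"
    using card_image_le[OF insert(1), of h] insert by fastforce
  then obtain x where x: "x \<in> S i" "x \<notin> h ` I"
    by (meson card_mono finite_imageI insert(1) not_le subsetI)
  have "inj_on (h(i := x)) (insert i I) \<and> (\<forall>j\<in>insert i I. (h(i := x)) j \<in> S j)"
    using h x insert(2) by (auto simp: inj_on_def)
  then show ?case by blast
qed

lemma card_le_mult_card_image:
  assumes "finite P" "\<And>y. y \<in> f ` P \<Longrightarrow> card {p \<in> P. f p = y} \<le> k"
  shows "card P \<le> k * card (f ` P)"
proof -
  have "card P = (\<Sum>y\<in>f ` P. card {p \<in> P. f p = y})"
    using sum.group[where S=P and T="f ` P" and g=f and h="\<lambda>_. 1::nat"] assms(1) by simp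
  also have "\<dots> \<le> (\<Sum>y\<in>f ` P. k)"
    using assms(2) by (rule sum_mono)
  finally show ?thesis
    by (simp add: mult.commute)
qed

lemma sum_card_filter_swap:
  assumes "finite A" "finite B"
  shows "(\<Sum>a\<in>A. card {b \<in> B. R a b}) = (\<Sum>b\<in>B. card {a \<in> A. R a b})"
  using sum.swap_restrict[OF assms, of "\<lambda>_ _. 1::nat" R] by simp

lemma square_sum_le_card_mult_sum_squares:
  fixes x :: "'i \<Rightarrow> real"
  shows "(\<Sum>i\<in>I. x i)^2 \<le> real (card I) * (\<Sum>i\<in>I. (x i)^2)"
proof -
  have "0 \<le> (\<Sum>i\<in>I. \<Sum>j\<in>I. (x i - x j)^2)"
    by (intro sum_nonneg) auto
  also have "\<dots> = (\<Sum>i\<in>I. \<Sum>j\<in>I. (x i)^2) + (\<Sum>i\<in>I. \<Sum>j\<in>I. (x j)^2)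
      - 2 * (\<Sum>i\<in>I. \<Sum>j\<in>I. x i * x j)"
    by (simp add: power2_diff sum.distrib sum_subtractf sum_distrib_left mult.assoc)
  also have "\<dots> = 2 * real (card I) * (\<Sum>i\<in>I. (x i)^2) - 2 * (\<Sum>i\<in>I. x i)^2"
    by (simp add: power2_eq_square sum_distrib_left mult.assoc flip: sum_product)
  finally show ?thesis
    by simp
qed

lemma power2_add_div_le:
  fixes a b r :: real
  assumes "r > 0"
  shows "(a + b)^2 / (r + 1) \<le> a^2 + b^2 / r"
proof -
  have "r * (a + b)^2 \<le> r * (r + 1) * a^2 + (r + 1) * b^2"
    using zero_le_power2[of "r * a - b"] by (simp add: power2_eq_square algebra_simps)
  then show ?thesis
    using assms by (simp add: field_simps)
qed

lemma two_mult_choose_two_le_square: "2 * real (m choose 2) \<le> real m ^ 2"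
proof -
  have "2 * (m choose 2) \<le> m * (m - 1)"
    unfolding choose_two by (rule times_div_less_eq_dividend)
  also have "\<dots> \<le> m * m"
    by (rule mult_le_mono2) simp
  finally have "real (2 * (m choose 2)) \<le> real (m * m)"
    by (rule of_nat_mono)
  then show ?thesis
    by (simp add: power2_eq_square)
qed

section \<open>Graphs without large independent sets\<close>

definition ordered_edges :: "('v \<Rightarrow> 'v \<Rightarrow> bool) \<Rightarrow> 'v set \<Rightarrow> ('v \<times> 'v) set" where
  "ordered_edges F X = {(u, v). u \<in> X \<and> v \<in> X \<and> u \<noteq> v \<and> F u v}"

definition degree_in :: "('v \<Rightarrow> 'v \<Rightarrow> bool) \<Rightarrow> 'v set \<Rightarrow> 'v \<Rightarrow> nat" where
  "degree_in F X u = card {w \<in> X. w \<noteq> u \<and> F u w}"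

definition no_independent_set_of_size :: "('v \<Rightarrow> 'v \<Rightarrow> bool) \<Rightarrow> 'v set \<Rightarrow> nat \<Rightarrow> bool" where
  "no_independent_set_of_size F X k \<longleftrightarrow> (\<forall>Y\<subseteq>X. card Y = k \<longrightarrow> (\<exists>u\<in>Y. \<exists>v\<in>Y. u \<noteq> v \<and> F u v))"

lemma finite_ordered_edges: "finite X \<Longrightarrow> finite (ordered_edges F X)"
  by (rule finite_subset[of _ "X \<times> X"]) (auto simp: ordered_edges_def)

lemma card_ordered_edges_eq_sum_degree_in:
  assumes "finite X"
  shows "card (ordered_edges F X) = (\<Sum>u\<in>X. degree_in F X u)"
proof -
  have "ordered_edges F X = (SIGMA u:X. {w \<in> X. w \<noteq> u \<and> F u w})"
    unfolding ordered_edges_def by auto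
  then show ?thesis
    using assms by (simp add: degree_in_def)
qed

lemma degree_in_mono:
  assumes "finite X" "Y \<subseteq> X"
  shows "degree_in F Y u \<le> degree_in F X u"
  unfolding degree_in_def using assms by (intro card_mono) auto

lemma no_independent_set_of_sizeD:
  "no_independent_set_of_size F X k \<Longrightarrow> Y \<subseteq> X \<Longrightarrow> card Y = k \<Longrightarrow> \<exists>u\<in>Y. \<exists>v\<in>Y. u \<noteq> v \<and> F u v"
  unfolding no_independent_set_of_size_def by blast

lemma no_independent_set_of_size_delete_closed_nbhd:
  assumes sym: "\<And>u v. F u v \<Longrightarrow> F v u"
    and "no_independent_set_of_size F X (Suc k)" "finite X" "v \<in> X"
  shows "no_independent_set_of_size F (X - insert v {w \<in> X. w \<noteq> v \<and> F v w}) k"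
  unfolding no_independent_set_of_size_def
proof (intro allI impI)
  fix Y assume Y: "Y \<subseteq> X - insert v {w \<in> X. w \<noteq> v \<and> F v w}" "card Y = k"
  then have "finite Y"
    using assms(3) finite_subset by blast
  moreover have "v \<notin> Y"
    using Y(1) by blast
  ultimately have "insert v Y \<subseteq> X" "card (insert v Y) = Suc k"
    using Y assms(4) by auto
  then obtain u w where "u \<in> insert v Y" "w \<in> insert v Y" "u \<noteq> w" "F u w"
    using no_independent_set_of_sizeD[OF assms(2)] by blast
  moreover have "\<not> F v x \<and> \<not> F x v" if "x \<in> Y" for x
    using Y(1) that sym by blast
  ultimately show "\<exists>u\<in>Y. \<exists>w\<in>Y. u \<noteq> w \<and> F u w"
    by blast
qed

lemma card_ordered_edges_if_no_independent_pair:
  assumes sym: "\<And>u v. F u v \<Longrightarrow> F v u"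
    and "finite X" "no_independent_set_of_size F X 2"
  shows "card (ordered_edges F X) + card X = card X * card X"
proof -
  have "F u v" if "u \<in> X" "v \<in> X" "u \<noteq> v" for u v
  proof -
    have "{u, v} \<subseteq> X" "card {u, v} = 2"
      using that by auto
    then obtain x y where "x \<in> {u, v}" "y \<in> {u, v}" "x \<noteq> y" "F x y"
      using no_independent_set_of_sizeD[OF assms(3)] by blast
    then have "F u v \<or> F v u"
      by auto
    then show ?thesis
      using sym by blast
  qed
  then have "{w \<in> X. w \<noteq> u \<and> F u w} = X - {u}" if "u \<in> X" for u
    using that by auto
  then have "degree_in F X u = card X - 1" if "u \<in> X" for u
    using assms(2) that by (simp add: degree_in_def)
  then have "card (ordered_edges F X) = card X * (card X - 1)"
    using assms(2) by (simp add: card_ordered_edges_eq_sum_degree_in)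
  then show ?thesis
    by (cases "card X") simp_all
qed

lemma card_ordered_edges_delete_closed_nbhd:
  assumes "finite X" "v \<in> X" and min: "\<And>w. w \<in> X \<Longrightarrow> degree_in F X v \<le> degree_in F X w"
  defines "N \<equiv> insert v {w \<in> X. w \<noteq> v \<and> F v w}"
  shows "real (card N)^2 - real (card N) + real (card (ordered_edges F (X - N)))
    \<le> real (card (ordered_edges F X))"
proof -
  let ?d = "degree_in F X"
  have NX: "N \<subseteq> X"
    using assms(2) by (auto simp: N_def)
  have cN: "card N = ?d v + 1"
    using assms(1) by (simp add: N_def degree_in_def)
  have "card N * ?d v \<le> (\<Sum>u\<in>N. ?d u)"
    using sum_bounded_below[of N "?d v" ?d] min NX by auto
  moreover have "card (ordered_edges F (X - N)) \<le> (\<Sum>u\<in>X - N. ?d u)"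
    unfolding card_ordered_edges_eq_sum_degree_in[OF finite_Diff[OF assms(1)]]
    using degree_in_mono[OF assms(1)] by (intro sum_mono) auto
  moreover have "(\<Sum>u\<in>N. ?d u) + (\<Sum>u\<in>X - N. ?d u) = card (ordered_edges F X)"
    using sum.subset_diff[OF NX assms(1), of ?d] assms(1)
    by (simp add: card_ordered_edges_eq_sum_degree_in)
  ultimately have "(?d v + 1) * ?d v + card (ordered_edges F (X - N)) \<le> card (ordered_edges F X)"
    unfolding cN by linarith
  then have "real ((?d v + 1) * ?d v + card (ordered_edges F (X - N))) \<le> real (card (ordered_edges F X))"
    by (rule of_nat_mono)
  then show ?thesis
    unfolding cN by (simp add: power2_eq_square algebra_simps)
qed

lemma card_ordered_edges_ge_if_no_independent_set:
  assumes sym: "\<And>u v. F u v \<Longrightarrow> F v u"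
  shows "finite X \<Longrightarrow> no_independent_set_of_size F X (r + 2) \<Longrightarrow>
    real (card X)^2 / real (r + 1) - real (card X) \<le> real (card (ordered_edges F X))"
proof (induction r arbitrary: X)
  case 0
  then have "no_independent_set_of_size F X 2"
    by (simp add: numeral_2_eq_2)
  then have "card (ordered_edges F X) + card X = card X * card X"
    using card_ordered_edges_if_no_independent_pair[where F=F, OF sym "0.prems"(1)] by blast
  then have "real (card (ordered_edges F X) + card X) = real (card X * card X)"
    by (rule arg_cong)
  then show ?case
    by (simp add: power2_eq_square)
next
  case (Suc r)
  show ?case
  proof (cases "X = {}")
    case True
    then show ?thesis by simp
  next
    case False
    define v where "v = arg_min_on (degree_in F X) X"
    have v: "v \<in> X" "\<And>w. w \<in> X \<Longrightarrow> degree_in F X v \<le> degree_in F X w"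
      using arg_min_if_finite(1)[OF Suc.prems(1) False] arg_min_least[OF Suc.prems(1) False]
      unfolding v_def by auto
    define N where "N = insert v {w \<in> X. w \<noteq> v \<and> F v w}"
    have "no_independent_set_of_size F (X - N) (r + 2)"
      unfolding N_def using Suc.prems
      by (intro no_independent_set_of_size_delete_closed_nbhd[OF sym _ _ v(1)]) simp_all
    then have IH: "real (card (X - N))^2 / real (r + 1) - real (card (X - N))
        \<le> real (card (ordered_edges F (X - N)))"
      using Suc.IH Suc.prems(1) by blast
    have step: "real (card N)^2 - real (card N) + real (card (ordered_edges F (X - N)))
        \<le> real (card (ordered_edges F X))"
      unfolding N_def by (rule card_ordered_edges_delete_closed_nbhd[OF Suc.prems(1) v])
    have "N \<subseteq> X"
      using v(1) by (auto simp: N_def)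
    then have "card X = card N + card (X - N)"
      using card_Diff_subset[OF finite_subset[OF _ Suc.prems(1)]] card_mono[OF Suc.prems(1)] by simp
    moreover have "real (Suc r + 1) = real (r + 1) + 1"
      by simp
    ultimately show ?thesis
      using step IH power2_add_div_le[of "real (r + 1)" "real (card N)" "real (card (X - N))"]
      by (simp only: of_nat_add) linarith
  qed
qed

lemma sum_card_ordered_edges_ge:
  assumes sym: "\<And>u v. F u v \<Longrightarrow> F v u"
    and fin: "\<And>i. i \<in> I \<Longrightarrow> finite (X i)"
    and indep: "\<And>i. i \<in> I \<Longrightarrow> no_independent_set_of_size F (X i) (r + 2)"
  defines "D \<equiv> \<Sum>i\<in>I. real (card (X i))"
  shows "D^2 / (real (card I) * real (r + 1)) - D \<le> (\<Sum>i\<in>I. real (card (ordered_edges F (X i))))"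
proof -
  have "D^2 / (real (card I) * real (r + 1)) \<le> (\<Sum>i\<in>I. real (card (X i))^2) / real (r + 1)"
    using square_sum_le_card_mult_sum_squares[of "\<lambda>i. real (card (X i))" I]
    by (cases "card I = 0")
      (simp_all add: D_def divide_simps mult.commute sum_nonneg)
  also have "\<dots> - D = (\<Sum>i\<in>I. real (card (X i))^2 / real (r + 1) - real (card (X i)))"
    by (simp add: D_def sum_subtractf sum_divide_distrib)
  also have "\<dots> \<le> (\<Sum>i\<in>I. real (card (ordered_edges F (X i))))"
    using card_ordered_edges_ge_if_no_independent_set[OF sym fin indep] by (rule sum_mono)
  finally show ?thesis
    by linarith
qed

section \<open>Embedding the subdivision of L_{s,t}\<close>

lemma contains_subdivisionI:
  assumes "A \<inter> B = {}" "inj_on g V" "g ` V \<subseteq> A" "inj_on h Es" "h ` Es \<subseteq> B"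
    and "\<And>v e. v \<in> V \<Longrightarrow> e \<in> Es \<Longrightarrow> v \<in> e \<Longrightarrow> adj E (g v) (h e)"
  shows "contains_subdivision V Es A B E"
  unfolding contains_subdivision_def
proof (intro exI conjI ballI impI)
  have [simp]: "g x \<noteq> h e" "h e \<noteq> g x" if "x \<in> V" "e \<in> Es" for x e
    using that assms(1,3,5) by blast+
  show "inj_on (case_sum g h) (Inl ` V \<union> Inr ` Es)"
  proof (rule inj_onI)
    fix a b assume "a \<in> Inl ` V \<union> Inr ` Es" "b \<in> Inl ` V \<union> Inr ` Es"
      and "case_sum g h a = case_sum g h b"
    then show "a = b"
      by (elim UnE imageE)
        (simp_all add: inj_on_eq_iff[OF assms(2)] inj_on_eq_iff[OF assms(4)])
  qed
  show "case_sum g h ` (Inl ` V \<union> Inr ` Es) \<subseteq> A \<union> B"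
    using assms(3,5) by (simp add: image_Un image_image) blast
  show "adj E (case_sum g h (Inl v)) (case_sum g h (Inr e))" if "v \<in> V" "e \<in> Es" "v \<in> e" for v e
    using assms(6)[OF that] by simp
qed

lemma finite_L_V: "finite (L_V s t)"
  unfolding L_V_def L_S_def L_T_def by simp

lemma card_L_V: "card (L_V s t) = s + (t - 1)"
  unfolding L_V_def L_S_def L_T_def
  by (subst card_Un_disjoint) (auto simp: card_image)

lemma card_L_E_le: "card (L_E s t) \<le> card (L_V s t) choose 2"
proof -
  have "L_E s t \<subseteq> {e. e \<subseteq> L_V s t \<and> card e = 2}"
    unfolding L_E_def by auto
  then have "card (L_E s t) \<le> card {e. e \<subseteq> L_V s t \<and> card e = 2}"
    by (intro card_mono) (simp_all add: finite_L_V)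
  then show ?thesis
    by (simp add: n_subsets finite_L_V)
qed

lemma finite_L_E: "finite (L_E s t)"
  by (rule finite_subset[of _ "Pow (L_V s t)"]) (auto simp: L_E_def finite_L_V)

lemma nbhd_subset:
  assumes "bipartite_graph A B E" "u \<in> A"
  shows "nbhd A B E u \<subseteq> B"
  using assms unfolding bipartite_graph_def nbhd_def adj_def by auto

lemma finite_nbhd: "bipartite_graph A B E \<Longrightarrow> finite (nbhd A B E u)"
  unfolding bipartite_graph_def nbhd_def by simp

lemma contains_L'_stI:
  assumes bg: "bipartite_graph A B E" and "inj_on g (L_V s t)" "g ` L_V s t \<subseteq> A" "inj_on h (L_E s t)"
    and "\<And>e. e \<in> L_E s t \<Longrightarrow> h e \<in> B \<inter> (\<Inter>v\<in>e. nbhd A B E (g v))"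
  shows "contains_L'_st s t A B E"
  unfolding contains_L'_st_def
proof (rule contains_subdivisionI[OF _ assms(2-4)])
  show "A \<inter> B = {}"
    using bg by (simp add: bipartite_graph_def)
  show "h ` L_E s t \<subseteq> B"
    using assms(5) by blast
  show "adj E (g v) (h e)" if "v \<in> L_V s t" "e \<in> L_E s t" "v \<in> e" for v e
    using assms(5)[OF that(2)] that(3) unfolding nbhd_def by blast
qed

lemma contains_L'_st_if_pairwise_heavy:
  assumes bg: "bipartite_graph A B E" and XA: "X \<subseteq> A" and cX: "card X = s + t - 1" and "t \<ge> 1"
    and heavy: "\<And>u v. u \<in> X \<Longrightarrow> v \<in> X \<Longrightarrow> u \<noteq> v \<Longrightarrow> (s + t - 1) choose 2 \<le> codeg A B E u v"
  shows "contains_L'_st s t A B E"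
proof -
  have "finite X"
    using XA bg finite_subset unfolding bipartite_graph_def by blast
  moreover have "card (L_V s t) = card X"
    using card_L_V[of s t] cX \<open>t \<ge> 1\<close> by simp
  ultimately obtain g where g: "bij_betw g (L_V s t) X"
    using finite_same_card_bij[OF finite_L_V] by blast
  have gA: "g v \<in> A" if "v \<in> L_V s t" for v
    using bij_betwE[OF g] XA that by blast
  define S where "S e = B \<inter> (\<Inter>v\<in>e. nbhd A B E (g v))" for e
  have S_large: "finite (S e) \<and> (s + t - 1) choose 2 \<le> card (S e)" if "e \<in> L_E s t" for e
  proof -
    obtain x y where xy: "e = {x, y}" "x \<in> L_V s t" "y \<in> L_V s t" "x \<noteq> y"
      using \<open>e \<in> L_E s t\<close> unfolding L_E_def by blast
    have "nbhd A B E (g x) \<subseteq> B"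
      using nbhd_subset[OF bg gA[OF xy(2)]] .
    then have Se: "S e = nbhd A B E (g x) \<inter> nbhd A B E (g y)"
      unfolding S_def xy(1) by blast
    have "g x \<in> X" "g y \<in> X"
      using bij_betwE[OF g] xy(2,3) by blast+
    moreover have "g x \<noteq> g y"
      using inj_on_contraD[OF bij_betw_imp_inj_on[OF g] xy(4,2,3)] .
    ultimately have "(s + t - 1) choose 2 \<le> card (S e)"
      unfolding Se codeg_def[symmetric] by (rule heavy)
    then show ?thesis
      unfolding Se using finite_nbhd[OF bg] by blast
  qed
  have "card (L_E s t) \<le> (s + t - 1) choose 2"
    using card_L_E_le[of s t] card_L_V[of s t] \<open>t \<ge> 1\<close> by simp
  then obtain h where h: "inj_on h (L_E s t)" "\<forall>e\<in>L_E s t. h e \<in> S e"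
    using ex_inj_choice[where S=S, OF finite_L_E _ S_large] by blast
  show ?thesis
  proof (rule contains_L'_stI[OF bg bij_betw_imp_inj_on[OF g] _ h(1)])
    show "g ` L_V s t \<subseteq> A"
      using gA by blast
    show "h e \<in> B \<inter> (\<Inter>v\<in>e. nbhd A B E (g v))" if "e \<in> L_E s t" for e
      using h(2) that unfolding S_def by blast
  qed
qed

section \<open>Counting light edges\<close>

lemma light_edge_commute: "light_edge s t A B E u v = light_edge s t A B E v u"
  unfolding light_edge_def codeg_def by (auto simp: Int_commute)

lemma no_independent_light_set_in_common_nbhd:
  assumes bg: "bipartite_graph A B E" and "\<not> contains_L'_st s t A B E" "t \<ge> 1" "U \<subseteq> A"
  shows "no_independent_set_of_size (light_edge s t A B E) {u \<in> U. b \<in> nbhd A B E u} (s + t - 1)"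
  unfolding no_independent_set_of_size_def
proof (intro allI impI; rule ccontr)
  fix Y assume Y: "Y \<subseteq> {u \<in> U. b \<in> nbhd A B E u}" "card Y = s + t - 1"
    and no_light: "\<not> (\<exists>u\<in>Y. \<exists>v\<in>Y. u \<noteq> v \<and> light_edge s t A B E u v)"
  have "(s + t - 1) choose 2 \<le> codeg A B E u v" if "u \<in> Y" "v \<in> Y" "u \<noteq> v" for u v
  proof -
    have "b \<in> nbhd A B E u \<inter> nbhd A B E v"
      using that Y(1) by auto
    then have "0 < codeg A B E u v"
      unfolding codeg_def using finite_nbhd[OF bg, of u] by (subst card_gt_0_iff) blast
    moreover have "u \<in> A" "v \<in> A"
      using that(1,2) Y(1) \<open>U \<subseteq> A\<close> by auto
    moreover have "\<not> light_edge s t A B E u v"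
      using no_light that by blast
    ultimately show ?thesis
      using that(3) unfolding light_edge_def by linarith
  qed
  then have "contains_L'_st s t A B E"
    using contains_L'_st_if_pairwise_heavy[OF bg _ Y(2) \<open>t \<ge> 1\<close>] Y(1) \<open>U \<subseteq> A\<close> by blast
  with assms(2) show False ..
qed

lemma card_ordered_light_edges_le:
  assumes "finite U"
  shows "card (ordered_edges (light_edge s t A B E) U) \<le> 2 * num_light_edges s t A B E U"
proof -
  let ?P = "ordered_edges (light_edge s t A B E) U"
  let ?f = "\<lambda>(u, v). {u, v}"
  have "?f ` ?P = {{u, v} | u v. u \<in> U \<and> v \<in> U \<and> light_edge s t A B E u v}"
    unfolding ordered_edges_def light_edge_def by auto
  moreover have "card ?P \<le> 2 * card (?f ` ?P)"
  proof (rule card_le_mult_card_image)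
    show "finite ?P"
      using assms by (rule finite_ordered_edges)
    fix y assume "y \<in> ?f ` ?P"
    then obtain u v where "y = {u, v}"
      by auto
    have "{p \<in> ?P. ?f p = y} \<subseteq> {(u, v), (v, u)}"
    proof
      fix p assume "p \<in> {p \<in> ?P. ?f p = y}"
      then have "?f p = {u, v}"
        using \<open>y = {u, v}\<close> by simp
      moreover obtain a c where "p = (a, c)"
        by (cases p)
      ultimately have "p = (a, c)" "{a, c} = {u, v}"
        by simp_all
      then show "p \<in> {(u, v), (v, u)}"
        unfolding doubleton_eq_iff by blast
    qed
    then have "card {p \<in> ?P. ?f p = y} \<le> card {(u, v), (v, u)}"
      by (rule card_mono[rotated]) simp
    also have "\<dots> \<le> 2"
      by (rule card_insert_le_m1) simp_all
    finally show "card {p \<in> ?P. ?f p = y} \<le> 2" .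
  qed
  ultimately show ?thesis
    unfolding num_light_edges_def by simp
qed

lemma sum_card_common_nbhd:
  assumes bg: "bipartite_graph A B E" and "U \<subseteq> A"
  shows "(\<Sum>b\<in>B. card {u \<in> U. b \<in> nbhd A B E u}) = (\<Sum>u\<in>U. card (nbhd A B E u))"
proof -
  have fin: "finite U" "finite B"
    using bg \<open>U \<subseteq> A\<close> finite_subset unfolding bipartite_graph_def by blast+
  have "{b \<in> B. b \<in> nbhd A B E u} = nbhd A B E u" if "u \<in> U" for u
    using nbhd_subset[OF bg] that \<open>U \<subseteq> A\<close> by blast
  then show ?thesis
    using sum_card_filter_swap[OF fin(2,1), of "\<lambda>b u. b \<in> nbhd A B E u"] by simp
qed

lemma sum_card_ordered_edges_common_nbhd:
  assumes bg: "bipartite_graph A B E" and "U \<subseteq> A"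
  shows "(\<Sum>b\<in>B. card (ordered_edges F {u \<in> U. b \<in> nbhd A B E u}))
    = (\<Sum>p\<in>ordered_edges F U. codeg A B E (fst p) (snd p))"
proof -
  have "finite U" "finite B"
    using bg \<open>U \<subseteq> A\<close> finite_subset unfolding bipartite_graph_def by blast+
  then have fin: "finite (ordered_edges F U)" "finite B"
    using finite_ordered_edges by blast+
  have NB: "nbhd A B E u \<subseteq> B" if "u \<in> U" for u
    using nbhd_subset[OF bg] \<open>U \<subseteq> A\<close> that by blast
  have "ordered_edges F {u \<in> U. b \<in> nbhd A B E u}
      = {p \<in> ordered_edges F U. b \<in> nbhd A B E (fst p) \<inter> nbhd A B E (snd p)}" for b
    unfolding ordered_edges_def by auto
  moreover have "{b \<in> B. b \<in> nbhd A B E (fst p) \<inter> nbhd A B E (snd p)}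
      = nbhd A B E (fst p) \<inter> nbhd A B E (snd p)" if "p \<in> ordered_edges F U" for p
    using that NB[of "fst p"] by (auto simp: ordered_edges_def)
  ultimately show ?thesis
    using sum_card_filter_swap[OF fin(2,1), of "\<lambda>b p. b \<in> nbhd A B E (fst p) \<inter> nbhd A B E (snd p)"]
    by (simp add: codeg_def)
qed

lemma card_pos_if_positive_degree:
  assumes "bipartite_graph A B E" "u \<in> A" "0 < \<delta>" "\<delta> \<le> real (card (nbhd A B E u))"
  shows "0 < card B"
proof -
  have "card (nbhd A B E u) \<le> card B"
    using assms(1) nbhd_subset[OF assms(1,2)] by (intro card_mono) (simp_all add: bipartite_graph_def)
  then show ?thesis
    using assms(3,4) by linarith
qed

lemma square_le_of_excess_bound:
  fixes D P c k n \<rho> :: real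
  assumes "0 < n" "0 < \<rho>" "\<rho> \<le> k" "8 * k * n \<le> D" "2 * c \<le> k^2" "0 \<le> P"
    and excess: "D^2 / (n * \<rho>) - D \<le> P * c"
  shows "D^2 \<le> k^3 * n * P"
proof -
  have kn: "0 < k * n"
    using assms(1-3) by simp
  define q where "q = D^2 / (k * n)"
  have "D * (8 * (k * n)) \<le> D * D"
    using assms(4) kn by (intro mult_left_mono) auto
  then have "D \<le> q / 8"
    using kn by (simp add: q_def pos_le_divide_eq power2_eq_square)
  moreover have "q \<le> D^2 / (n * \<rho>)"
    unfolding q_def using assms(1-3) by (intro divide_left_mono) (auto simp: mult.commute)
  moreover have "P * c \<le> P * k^2 / 2"
    using mult_left_mono[OF assms(5,6)] by simp
  ultimately have "7 * q \<le> 4 * (P * k^2)"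
    using excess by linarith
  then have "7 * D^2 \<le> 4 * (P * k^2 * (k * n))"
    using kn by (simp add: q_def pos_divide_le_eq)
  moreover have "k^3 * n * P = P * k^2 * (k * n)"
    by (simp add: power2_eq_square power3_eq_cube)
  moreover have "0 \<le> P * k^2 * (k * n)"
    using assms(6) kn by simp
  ultimately show ?thesis
    by linarith
qed

lemma common_nbhd_excess_le_light_pairs:
  assumes "t \<ge> 3" and bg: "bipartite_graph A B E" and "\<not> contains_L'_st s t A B E" "U \<subseteq> A"
  defines "D \<equiv> \<Sum>b\<in>B. real (card {u \<in> U. b \<in> nbhd A B E u})"
  shows "D^2 / (real (card B) * real (s + t - 2)) - D
    \<le> real (card (ordered_edges (light_edge s t A B E) U)) * real ((s + t - 1) choose 2)"
proof -
  define F where "F = light_edge s t A B E"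
  define X where "X b = {u \<in> U. b \<in> nbhd A B E u}" for b
  have "finite U"
    using bg \<open>U \<subseteq> A\<close> finite_subset unfolding bipartite_graph_def by blast
  have "s + t - 3 + 2 = s + t - 1"
    using \<open>t \<ge> 3\<close> by simp
  then have "D^2 / (real (card B) * real (s + t - 3 + 1)) - D \<le> (\<Sum>b\<in>B. real (card (ordered_edges F (X b))))"
    unfolding D_def X_def[symmetric]
    using no_independent_light_set_in_common_nbhd[OF bg assms(3) _ \<open>U \<subseteq> A\<close>] \<open>t \<ge> 3\<close> \<open>finite U\<close>
    by (intro sum_card_ordered_edges_ge) (auto simp: F_def X_def light_edge_commute)
  also have "\<dots> \<le> real (card (ordered_edges F U)) * real ((s + t - 1) choose 2)"
  proof -
    have "(\<Sum>p\<in>ordered_edges F U. codeg A B E (fst p) (snd p))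
        \<le> (\<Sum>p\<in>ordered_edges F U. (s + t - 1) choose 2)"
      by (rule sum_mono) (auto simp: ordered_edges_def F_def light_edge_def)
    then show ?thesis
      using sum_card_ordered_edges_common_nbhd[OF bg \<open>U \<subseteq> A\<close>, of F]
      by (simp add: X_def flip: of_nat_sum of_nat_mult)
  qed
  moreover have "s + t - 3 + 1 = s + t - 2"
    using \<open>t \<ge> 3\<close> by simp
  ultimately show ?thesis
    by (simp add: F_def)
qed

lemma card_ordered_light_edges_ge:
  assumes "s \<ge> 1" "t \<ge> 3" "\<delta> > 0" and bg: "bipartite_graph A B E" and "card B = n"
    and "\<not> contains_L'_st s t A B E" and deg: "\<And>u. u \<in> A \<Longrightarrow> \<delta> \<le> real (card (nbhd A B E u))"
    and "U \<subseteq> A" "U \<noteq> {}" and big: "8 * real (s + t) * real n / \<delta> \<le> real (card U)"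
  shows "(real (card U) * \<delta>)^2 / (real (s + t)^3 * real n)
    \<le> real (card (ordered_edges (light_edge s t A B E) U))"
proof -
  define D where "D = (\<Sum>b\<in>B. real (card {u \<in> U. b \<in> nbhd A B E u}))"
  let ?P = "real (card (ordered_edges (light_edge s t A B E) U))"
  obtain u where "u \<in> A"
    using \<open>U \<noteq> {}\<close> \<open>U \<subseteq> A\<close> by blast
  then have "0 < real n"
    using card_pos_if_positive_degree[OF bg _ \<open>\<delta> > 0\<close> deg] \<open>card B = n\<close> by simp
  have "(\<Sum>u\<in>U. \<delta>) \<le> (\<Sum>u\<in>U. real (card (nbhd A B E u)))"
    by (rule sum_mono) (use deg \<open>U \<subseteq> A\<close> in blast)
  then have "real (card U) * \<delta> \<le> D"
    using sum_card_common_nbhd[OF bg \<open>U \<subseteq> A\<close>] by (simp add: D_def flip: of_nat_sum)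
  have "D^2 \<le> real (s + t)^3 * real n * ?P"
  proof (rule square_le_of_excess_bound[OF \<open>0 < real n\<close>])
    show "D^2 / (real n * real (s + t - 2)) - D \<le> ?P * real ((s + t - 1) choose 2)"
      using common_nbhd_excess_le_light_pairs[OF \<open>t \<ge> 3\<close> bg assms(6) \<open>U \<subseteq> A\<close>] \<open>card B = n\<close>
      by (simp add: D_def)
    show "0 < real (s + t - 2)" "real (s + t - 2) \<le> real (s + t)"
      using \<open>t \<ge> 3\<close> by simp_all
    show "8 * real (s + t) * real n \<le> D"
      using big \<open>real (card U) * \<delta> \<le> D\<close> \<open>\<delta> > 0\<close> by (simp add: pos_divide_le_eq)
    have "2 * real ((s + t - 1) choose 2) \<le> real (s + t - 1)^2"
      by (rule two_mult_choose_two_le_square)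
    also have "\<dots> \<le> real (s + t)^2"
      by (intro power_mono) simp_all
    finally show "2 * real ((s + t - 1) choose 2) \<le> real (s + t)^2" .
  qed simp
  moreover have "(real (card U) * \<delta>)^2 \<le> D^2"
    using \<open>real (card U) * \<delta> \<le> D\<close> \<open>\<delta> > 0\<close> by (intro power_mono) auto
  moreover have "0 < real (s + t)^3 * real n"
    using \<open>0 < real n\<close> assms(1) by simp
  ultimately show ?thesis
    by (simp add: pos_divide_le_eq ac_simps)
qed

theorem corollary11:
  fixes s t n :: nat and \<delta> :: real and A B :: "'a set" and E :: "('a \<times> 'a) set"
  assumes "s \<ge> 1" and "t \<ge> 3" and "\<delta> > 0"
    and "bipartite_graph A B E" and "card B = n"
    and "\<not> contains_L'_st s t A B E"
    and "\<forall>u\<in>A. real (card (nbhd A B E u)) \<ge> \<delta>"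
  shows "\<forall>U. U \<subseteq> A \<and> real (card U) \<ge> 8 * real (s + t) * real n / \<delta> \<and> card U \<ge> 2 \<longrightarrow>
           real (num_light_edges s t A B E U)
             \<ge> \<delta>^2 / (8 * real (s + t)^3 * real n) * real (card U choose 2)"
proof (intro allI impI)
  fix U assume U: "U \<subseteq> A \<and> real (card U) \<ge> 8 * real (s + t) * real n / \<delta> \<and> card U \<ge> 2"
  then have "finite U" "U \<noteq> {}"
    using assms(4) finite_subset unfolding bipartite_graph_def by auto
  then have "0 < real n"
    using card_pos_if_positive_degree[OF assms(4) _ assms(3)] assms(5,7) U by force
  let ?P = "real (card (ordered_edges (light_edge s t A B E) U))"
  let ?c = "\<delta>^2 / (8 * real (s + t)^3 * real n)"
  have "?c * real (card U choose 2) \<le> ?c * (real (card U)^2 / 2)"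
    using two_mult_choose_two_le_square[of "card U"] by (intro mult_left_mono) simp_all
  also have "\<dots> = (real (card U) * \<delta>)^2 / (real (s + t)^3 * real n) / 16"
    using \<open>0 < real n\<close> by (simp add: power_mult_distrib field_simps)
  also have "\<dots> \<le> ?P / 16"
    using card_ordered_light_edges_ge[OF assms(1-6)] assms(7) U \<open>U \<noteq> {}\<close>
    by (intro divide_right_mono) auto
  also have "\<dots> \<le> real (num_light_edges s t A B E U)"
    using card_ordered_light_edges_le[OF \<open>finite U\<close>, of s t A B E] by linarith
  finally show "?c * real (card U choose 2) \<le> real (num_light_edges s t A B E U)" .
qed

end
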